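(* For every integer $n\ge 0$, $$\Phi^{(1)}[a; bq^n, b'; c; x, y] = \sum_{k=0}^n \begin{bmatrix} n \\ k \end{bmatrix} q^{2\binom{k}{2}} \frac{(bx)^k (a; q)_k}{(c; q)_k} \Phi^{(1)}[aq^k; bq^k, b'; cq^k; x, y]$$ and $$\Phi^{(1)}[a; bq^{-n}, b'; c; x, y] = \sum_{k=0}^n \begin{bmatrix} n \\ k \end{bmatrix} q^{\binom{k}{2} - nk} \frac{(-bx)^k (a; q)_k}{(c; q)_k} \Phi^{(1)}[aq^k; b, b'; cq^k; x, y].$$
   Context: Let $q$ be a complex number with $0<|q|<1$. For complex $z$ and integer $m\ge 0$, $(z;q)_m=\prod_{j=0}^{m-1}(1-zq^j)$, with $(z;q)_0=1$. For integers $0\le k\le n$, $\begin{bmatrix} n \\ k \end{bmatrix}=\frac{(q;q)_n}{(q;q)_k(q;q)_{n-k}}$ is the $q$-binomial coefficient. The $q$-Appell function $\Phi^{(1)}$ is $$\Phi^{(1)}[a; b, b'; c; x, y] = \sum_{m, n \geq 0} \frac{(a; q)_{m+n} (b; q)_m (b'; q)_n}{(q; q)_m (q; q)_n (c; q)_{m+n}} x^m y^n.$$ Identities are understood as identities of power series in $x,y$ (formal, or convergent for small $|x|,|y|$), with complex parameters chosen so that no denominator occurring vanishes. *)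

theory Defs
  imports "HOL-Computational_Algebra.Formal_Power_Series"
begin

definition qpoch :: "complex \<Rightarrow> complex \<Rightarrow> nat \<Rightarrow> complex" where
  "qpoch z q m = (\<Prod>j<m. 1 - z * q ^ j)"

definition qbinom :: "complex \<Rightarrow> nat \<Rightarrow> nat \<Rightarrow> complex" where
  "qbinom q n k = qpoch q q n / (qpoch q q k * qpoch q q (n - k))"

text \<open>The q-Appell function Phi^(1) as a formal power series in two variables x, y:
  an element of (complex fps) fps; the outer variable is x, the inner one is y,
  so the coefficient of x^m y^n is the (m,n) term.\<close>
definition qAppell1 ::
  "complex \<Rightarrow> complex \<Rightarrow> complex \<Rightarrow> complex \<Rightarrow> complex \<Rightarrow> complex fps fps" where
  "qAppell1 q a b b' c = Abs_fps (\<lambda>m. Abs_fps (\<lambda>n.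
      qpoch a q (m + n) * qpoch b q m * qpoch b' q n /
      (qpoch q q m * qpoch q q n * qpoch c q (m + n))))"

abbreviation fpsX :: "complex fps fps" where "fpsX \<equiv> fps_X"
abbreviation cst :: "complex \<Rightarrow> complex fps fps" where "cst z \<equiv> fps_const (fps_const z)"

end

theory Submission
  imports Defs
begin

text \<open>
  Everything reduces to the one-variable q-binomial series F(b) = sum_m (b;q)_m / (q;q)_m x^m:
  the coefficient of x^m y^n in Phi^(1)[a; b, b'; c; x, y] is the m-th coefficient of F(b) times
  a weight independent of b, and this weight is compatible with replacing a, c, m by aq^k, cq^k, m - k.
  So both identities need only be proved for F, which satisfies F(b) = (1 - bx) F(bq). Read as
  F(bq^(n+1)) = F(bq^n) + bq^n x F(bq^(n+1)), this yields the first identity by induction on n with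
  the q-Pascal rule; iterated n times it yields F(bq^-n) = (bq^-n x; q)_n F(b), and expanding this
  finite product by the q-binomial theorem yields the second.
\<close>

lemma qpoch_0 [simp]: "qpoch z q 0 = 1"
  by (simp add: qpoch_def)

lemma qpoch_Suc: "qpoch z q (Suc m) = qpoch z q m * (1 - z * q ^ m)"
  by (simp add: qpoch_def)

lemma qpoch_add: "qpoch z q (k + j) = qpoch z q k * qpoch (z * q ^ k) q j"
  by (induction j) (auto simp: qpoch_Suc power_add mult_ac)

lemma qpoch_Suc_left: "qpoch z q (Suc m) = (1 - z) * qpoch (z * q) q m"
  using qpoch_add[of z q 1 m] by (simp add: qpoch_def)

lemma qpoch_q_nonzero:
  assumes "norm q < 1"
  shows "qpoch q q m \<noteq> 0"
proof -
  have "q * q ^ j \<noteq> 1" for j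
  proof
    assume "q * q ^ j = 1"
    then have "norm q ^ Suc j = 1"
      by (metis norm_one norm_power power_Suc)
    moreover have "norm q ^ Suc j < 1"
      using assms by (simp add: power_less_one_iff del: power_Suc)
    ultimately show False
      by simp
  qed
  then show ?thesis
    by (simp add: qpoch_def)
qed

definition qchoose :: "complex \<Rightarrow> nat \<Rightarrow> nat \<Rightarrow> complex" where
  "qchoose q n k = (if k \<le> n then qbinom q n k else 0)"

lemma qchoose_0:
  assumes "qpoch q q n \<noteq> 0"
  shows "qchoose q n 0 = 1"
  using assms by (simp add: qchoose_def qbinom_def)

lemma qchoose_eq_0: "n < k \<Longrightarrow> qchoose q n k = 0"
  by (simp add: qchoose_def)

lemma qchoose_Suc_Suc:
  assumes "\<And>m. qpoch q q m \<noteq> 0"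
  shows "qchoose q (Suc n) (Suc k) = qchoose q n (Suc k) + q ^ (n - k) * qchoose q n k"
proof (cases "k < n")
  case True
  then obtain d where n: "n = Suc (k + d)"
    using less_imp_Suc_add by metis
  define s t where "s = 1 - q * q ^ k" and "t = 1 - q * q ^ d"
  have nonzero: "qpoch q q k \<noteq> 0" "qpoch q q d \<noteq> 0" "s \<noteq> 0" "t \<noteq> 0"
    using assms[of k] assms[of d] assms[of "Suc k"] assms[of "Suc d"]
    by (auto simp: qpoch_Suc s_def t_def)
  have "qchoose q (Suc n) (Suc k) =
      qpoch q q n * (1 - (1 - s) * (1 - t)) / (qpoch q q k * s * (qpoch q q d * t))"
    by (simp add: qchoose_def qbinom_def qpoch_Suc n s_def t_def power_add mult_ac)
  also have "\<dots> = qpoch q q n / (qpoch q q k * s * qpoch q q d) +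
      (1 - t) * (qpoch q q n / (qpoch q q k * (qpoch q q d * t)))"
    using nonzero by (simp add: field_simps)
  also have "\<dots> = qchoose q n (Suc k) + q ^ (n - k) * qchoose q n k"
    by (simp add: qchoose_def qbinom_def qpoch_Suc n s_def t_def)
  finally show ?thesis .
next
  case False
  then show ?thesis
    using assms[of n] assms[of "Suc n"]
    by (cases "k = n") (simp_all add: qchoose_def qbinom_def)
qed

definition qbinomial_fps :: "complex \<Rightarrow> complex \<Rightarrow> complex fps" where
  "qbinomial_fps q b = Abs_fps (\<lambda>m. qpoch b q m / qpoch q q m)"

definition qpoch_fps :: "complex \<Rightarrow> complex \<Rightarrow> nat \<Rightarrow> complex fps" where
  "qpoch_fps q z n = (\<Prod>j<n. 1 - fps_const (z * q ^ j) * fps_X)"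

lemma qpoch_fps_Suc: "qpoch_fps q z (Suc n) = qpoch_fps q z n * (1 - fps_const (z * q ^ n) * fps_X)"
  by (simp add: qpoch_fps_def)

lemma qpoch_fps_Suc_left: "qpoch_fps q z (Suc n) = (1 - fps_const z * fps_X) * qpoch_fps q (z * q) n"
  unfolding qpoch_fps_def prod.lessThan_Suc_shift by (simp add: mult_ac)

lemma qbinomial_fps_shift:
  assumes "\<And>m. qpoch q q m \<noteq> 0"
  shows "qbinomial_fps q b = (1 - fps_const b * fps_X) * qbinomial_fps q (b * q)"
proof (rule fps_ext)
  fix m
  show "fps_nth (qbinomial_fps q b) m = fps_nth ((1 - fps_const b * fps_X) * qbinomial_fps q (b * q)) m"
  proof (cases m)
    case 0
    then show ?thesis
      by (simp add: qbinomial_fps_def algebra_simps)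
  next
    case (Suc k)
    have "qpoch q q k \<noteq> 0" "1 - q * q ^ k \<noteq> 0"
      using assms[of k] assms[of "Suc k"] by (auto simp: qpoch_Suc)
    then have "qpoch b q (Suc k) / qpoch q q (Suc k) =
        qpoch (b * q) q (Suc k) / qpoch q q (Suc k) - b * (qpoch (b * q) q k / qpoch q q k)"
      unfolding qpoch_Suc_left[of b] qpoch_Suc[of "b * q"] qpoch_Suc[of q q k]
      by (simp add: field_simps)
    then show ?thesis
      by (simp add: Suc qbinomial_fps_def algebra_simps fps_X_mult_nth)
  qed
qed

lemma qbinomial_fps_eq_qpoch_fps_mult:
  assumes "\<And>m. qpoch q q m \<noteq> 0"
  shows "qbinomial_fps q b = qpoch_fps q b n * qbinomial_fps q (b * q ^ n)"
proof (induction n arbitrary: b)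
  case 0
  then show ?case
    by (simp add: qpoch_fps_def)
next
  case (Suc n)
  have "qbinomial_fps q b = (1 - fps_const b * fps_X) * qbinomial_fps q (b * q)"
    using assms by (rule qbinomial_fps_shift)
  also have "\<dots> = (1 - fps_const b * fps_X) * (qpoch_fps q (b * q) n * qbinomial_fps q (b * q * q ^ n))"
    by (simp only: Suc.IH[of "b * q"])
  also have "\<dots> = qpoch_fps q b (Suc n) * qbinomial_fps q (b * q ^ Suc n)"
    by (simp add: qpoch_fps_Suc_left mult_ac)
  finally show ?case .
qed

lemma sum_qchoose_Suc:
  fixes c :: "nat \<Rightarrow> complex" and v :: "nat \<Rightarrow> complex fps"
  assumes "\<And>m. qpoch q q m \<noteq> 0"
  shows "(\<Sum>k\<le>Suc n. fps_const (qchoose q (Suc n) k * c k) * v k) =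
    (\<Sum>k\<le>n. fps_const (qchoose q n k * c k) * v k) +
    (\<Sum>k\<le>n. fps_const (q ^ (n - k) * qchoose q n k * c (Suc k)) * v (Suc k))"
proof -
  have "(\<Sum>k\<le>Suc n. fps_const (qchoose q (Suc n) k * c k) * v k) =
      fps_const (c 0) * v 0 + (\<Sum>k\<le>n. fps_const (qchoose q (Suc n) (Suc k) * c (Suc k)) * v (Suc k))"
    unfolding sum.atMost_Suc_shift using assms by (simp add: qchoose_0)
  also have "\<dots> = fps_const (c 0) * v 0 + (\<Sum>k\<le>n. fps_const (qchoose q n (Suc k) * c (Suc k)) * v (Suc k)) +
      (\<Sum>k\<le>n. fps_const (q ^ (n - k) * qchoose q n k * c (Suc k)) * v (Suc k))"
    by (simp add: qchoose_Suc_Suc[OF assms] sum.distrib distrib_right fps_const_add[symmetric]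
        del: fps_const_add)
  also have "fps_const (c 0) * v 0 + (\<Sum>k\<le>n. fps_const (qchoose q n (Suc k) * c (Suc k)) * v (Suc k)) =
      (\<Sum>k\<le>Suc n. fps_const (qchoose q n k * c k) * v k)"
    unfolding sum.atMost_Suc_shift using assms by (simp add: qchoose_0)
  also have "\<dots> = (\<Sum>k\<le>n. fps_const (qchoose q n k * c k) * v k)"
    by (simp add: qchoose_eq_0)
  finally show ?thesis .
qed

lemma qpoch_fps_eq_sum:
  assumes "\<And>m. qpoch q q m \<noteq> 0"
  shows "qpoch_fps q z n = (\<Sum>k\<le>n. fps_const (qchoose q n k * q ^ (k choose 2) * (- z) ^ k) * fps_X ^ k)"
proof (induction n)
  case 0
  then show ?case
    using assms by (simp add: qpoch_fps_def qchoose_0 binomial_eq_0)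
next
  case (Suc n)
  define c where "c k = q ^ (k choose 2) * (- z) ^ k" for k
  have IH: "qpoch_fps q z n = (\<Sum>k\<le>n. fps_const (qchoose q n k * c k) * fps_X ^ k)"
    using Suc.IH by (simp add: c_def mult.assoc)
  have step: "fps_const (qchoose q n k * c k) * fps_X ^ k * (fps_const (z * q ^ n) * fps_X) =
      - (fps_const (q ^ (n - k) * qchoose q n k * c (Suc k)) * fps_X ^ Suc k)" if "k \<le> n" for k
  proof -
    have "q ^ (n - k) * q ^ k = q ^ n"
      using that by (simp add: power_add[symmetric])
    then have scalar: "z * q ^ n * c k = - (q ^ (n - k) * c (Suc k))"
      by (simp add: c_def numeral_2_eq_2 power_add mult_ac)
    have "fps_const (qchoose q n k * c k) * fps_X ^ k * (fps_const (z * q ^ n) * fps_X) =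
        fps_const (qchoose q n k * (z * q ^ n * c k)) * fps_X ^ Suc k"
      by (simp only: fps_const_mult[symmetric] power_Suc mult_ac)
    then show ?thesis
      unfolding scalar by (simp add: mult_ac fps_const_neg[symmetric] del: fps_const_neg)
  qed
  have "qpoch_fps q z (Suc n) = qpoch_fps q z n - qpoch_fps q z n * (fps_const (z * q ^ n) * fps_X)"
    by (simp add: qpoch_fps_Suc algebra_simps)
  also have "\<dots> = (\<Sum>k\<le>n. fps_const (qchoose q n k * c k) * fps_X ^ k) +
      (\<Sum>k\<le>n. fps_const (q ^ (n - k) * qchoose q n k * c (Suc k)) * fps_X ^ Suc k)"
    by (simp add: IH sum_distrib_right step sum_negf)
  also have "\<dots> = (\<Sum>k\<le>Suc n. fps_const (qchoose q (Suc n) k * c k) * fps_X ^ k)"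
    by (rule sum_qchoose_Suc[OF assms, symmetric])
  finally show ?case
    by (simp add: c_def mult.assoc)
qed

lemma qbinomial_fps_mult_power_eq_sum:
  assumes "\<And>m. qpoch q q m \<noteq> 0"
  shows "qbinomial_fps q (b * q ^ n) =
    (\<Sum>k\<le>n. fps_const (qchoose q n k * q ^ (2 * (k choose 2)) * b ^ k) * fps_X ^ k * qbinomial_fps q (b * q ^ k))"
proof (induction n arbitrary: b)
  case 0
  then show ?case
    using assms by (simp add: qchoose_0 binomial_eq_0)
next
  case (Suc n)
  define c where "c b k = q ^ (2 * (k choose 2)) * b ^ k" for b k
  define v where "v b k = fps_X ^ k * qbinomial_fps q (b * q ^ k)" for b k
  have IH: "qbinomial_fps q (b' * q ^ n) = (\<Sum>k\<le>n. fps_const (qchoose q n k * c b' k) * v b' k)" for b'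
    using Suc.IH[of b'] by (simp add: c_def v_def mult.assoc)
  have step: "fps_const (b * q ^ n) * fps_X * (fps_const (qchoose q n k * c (b * q) k) * v (b * q) k) =
      fps_const (q ^ (n - k) * qchoose q n k * c b (Suc k)) * v b (Suc k)" if "k \<le> n" for k
  proof -
    have "q ^ (n - k) * q ^ k = q ^ n"
      using that by (simp add: power_add[symmetric])
    then have scalar: "q ^ (n - k) * qchoose q n k * c b (Suc k) = b * q ^ n * (qchoose q n k * c (b * q) k)"
      by (simp add: c_def numeral_2_eq_2 power_add power_mult_distrib mult_ac)
    have "v b (Suc k) = fps_X * v (b * q) k"
      by (simp add: v_def mult_ac)
    then show ?thesis
      unfolding scalar by (simp only: fps_const_mult[symmetric] mult_ac)
  qed
  have "qbinomial_fps q (b * q ^ Suc n) =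
      qbinomial_fps q (b * q ^ n) + fps_const (b * q ^ n) * fps_X * qbinomial_fps q ((b * q) * q ^ n)"
    using qbinomial_fps_shift[OF assms, of "b * q ^ n"] by (simp add: algebra_simps)
  also have "\<dots> = (\<Sum>k\<le>n. fps_const (qchoose q n k * c b k) * v b k) +
      (\<Sum>k\<le>n. fps_const (b * q ^ n) * fps_X * (fps_const (qchoose q n k * c (b * q) k) * v (b * q) k))"
    by (simp only: IH sum_distrib_left)
  also have "(\<Sum>k\<le>n. fps_const (b * q ^ n) * fps_X * (fps_const (qchoose q n k * c (b * q) k) * v (b * q) k)) =
      (\<Sum>k\<le>n. fps_const (q ^ (n - k) * qchoose q n k * c b (Suc k)) * v b (Suc k))"
    by (intro sum.cong refl step) simp
  also have "(\<Sum>k\<le>n. fps_const (qchoose q n k * c b k) * v b k) +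
      (\<Sum>k\<le>n. fps_const (q ^ (n - k) * qchoose q n k * c b (Suc k)) * v b (Suc k)) =
      (\<Sum>k\<le>Suc n. fps_const (qchoose q (Suc n) k * c b k) * v b k)"
    by (rule sum_qchoose_Suc[OF assms, symmetric])
  finally show ?case
    by (simp add: c_def v_def mult.assoc)
qed

lemma qbinomial_fps_mult_power_int_neg_eq_sum:
  assumes "\<And>m. qpoch q q m \<noteq> 0" and "q \<noteq> 0"
  shows "qbinomial_fps q (b * q powi (- int n)) =
    (\<Sum>k\<le>n. fps_const (qchoose q n k * q powi (int (k choose 2) - int n * int k) * (- b) ^ k) *
      fps_X ^ k * qbinomial_fps q b)"
proof -
  define z where "z = b * q powi (- int n)"
  have "z * q ^ n = b"
    using assms(2) by (simp add: z_def power_int_minus field_simps)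
  then have "qbinomial_fps q z = qpoch_fps q z n * qbinomial_fps q b"
    using qbinomial_fps_eq_qpoch_fps_mult[OF assms(1), of z n] by simp
  also have "\<dots> = (\<Sum>k\<le>n. fps_const (qchoose q n k * q ^ (k choose 2) * (- z) ^ k) * fps_X ^ k * qbinomial_fps q b)"
    by (simp add: qpoch_fps_eq_sum[OF assms(1)] sum_distrib_right)
  also have "\<dots> = (\<Sum>k\<le>n. fps_const (qchoose q n k * q powi (int (k choose 2) - int n * int k) * (- b) ^ k) *
      fps_X ^ k * qbinomial_fps q b)"
  proof (rule sum.cong[OF refl])
    fix k
    have "(- z) ^ k = ((- b) * q powi (- int n)) ^ k"
      by (simp add: z_def)
    also have "\<dots> = (- b) ^ k * q powi (- int n * int k)"
      by (simp only: power_mult_distrib power_int_power')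
    moreover have "q powi (int (k choose 2) - int n * int k) = q powi int (k choose 2) * q powi (- int n * int k)"
      by (subst power_int_add[symmetric]) (simp_all add: assms(2))
    ultimately have "q ^ (k choose 2) * (- z) ^ k = q powi (int (k choose 2) - int n * int k) * (- b) ^ k"
      by simp
    then show "fps_const (qchoose q n k * q ^ (k choose 2) * (- z) ^ k) * fps_X ^ k * qbinomial_fps q b =
        fps_const (qchoose q n k * q powi (int (k choose 2) - int n * int k) * (- b) ^ k) * fps_X ^ k * qbinomial_fps q b"
      by (simp add: mult.assoc)
  qed
  finally show ?thesis
    by (simp add: z_def)
qed

definition qAppell1_weight ::
    "complex \<Rightarrow> complex \<Rightarrow> complex \<Rightarrow> complex \<Rightarrow> nat \<Rightarrow> nat \<Rightarrow> complex" where
  "qAppell1_weight q a b' c m n = qpoch a q (m + n) * qpoch b' q n / (qpoch q q n * qpoch c q (m + n))"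

lemma qAppell1_nth_nth:
  "fps_nth (fps_nth (qAppell1 q a b b' c) m) n = qAppell1_weight q a b' c m n * fps_nth (qbinomial_fps q b) m"
  by (simp add: qAppell1_def qAppell1_weight_def qbinomial_fps_def mult_ac)

lemma qAppell1_weight_shift:
  assumes "k \<le> m"
  shows "qpoch a q k / qpoch c q k * qAppell1_weight q (a * q ^ k) b' (c * q ^ k) (m - k) n =
    qAppell1_weight q a b' c m n"
proof -
  have "m + n = k + (m - k + n)"
    using assms by simp
  then show ?thesis
    unfolding qAppell1_weight_def by (simp only: qpoch_add) (simp add: mult_ac)
qed

lemma qAppell1_eq_sumI:
  assumes "qbinomial_fps q B = (\<Sum>k\<in>K. fps_const (d k) * fps_X ^ k * qbinomial_fps q (b k))"
  shows "qAppell1 q a B b' c =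
    (\<Sum>k\<in>K. cst (d k * qpoch a q k / qpoch c q k) * fpsX ^ k * qAppell1 q (a * q ^ k) (b k) b' (c * q ^ k))"
    (is "?lhs = ?rhs")
proof (intro fps_ext)
  fix m n
  define G where "G k = (if m < k then 0 else fps_nth (qbinomial_fps q (b k)) (m - k))" for k
  have "fps_nth (fps_nth ?rhs m) n =
      (\<Sum>k\<in>K. d k * qpoch a q k / qpoch c q k *
        (if m < k then 0
         else qAppell1_weight q (a * q ^ k) b' (c * q ^ k) (m - k) n * fps_nth (qbinomial_fps q (b k)) (m - k)))"
    by (simp add: fps_sum_nth fps_X_power_mult_nth mult.assoc qAppell1_nth_nth
        if_distrib[of "\<lambda>f. fps_nth f n"] cong: if_cong)
  also have "\<dots> = qAppell1_weight q a b' c m n * (\<Sum>k\<in>K. d k * G k)"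
    unfolding sum_distrib_left G_def
  proof (intro sum.cong refl)
    fix k
    show "d k * qpoch a q k / qpoch c q k *
        (if m < k then 0
         else qAppell1_weight q (a * q ^ k) b' (c * q ^ k) (m - k) n * fps_nth (qbinomial_fps q (b k)) (m - k)) =
      qAppell1_weight q a b' c m n * (d k * (if m < k then 0 else fps_nth (qbinomial_fps q (b k)) (m - k)))"
      by (cases "m < k") (simp_all add: qAppell1_weight_shift[of k m a q c b' n, symmetric] mult_ac)
  qed
  also have "(\<Sum>k\<in>K. d k * G k) = fps_nth (qbinomial_fps q B) m"
    by (simp add: assms G_def fps_sum_nth fps_X_power_mult_nth mult.assoc)
  finally show "fps_nth (fps_nth ?lhs m) n = fps_nth (fps_nth ?rhs m) n"
    by (simp add: qAppell1_nth_nth)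
qed

theorem theorem4:
  fixes q a b b' c :: complex and n :: nat
  assumes "0 < norm q" and "norm q < 1"
    and "\<And>m. qpoch c q m \<noteq> 0"
  shows "qAppell1 q a (b * q ^ n) b' c =
           (\<Sum>k = 0..n. cst (qbinom q n k * q ^ (2 * (k choose 2)) * b ^ k * qpoch a q k / qpoch c q k)
                         * fpsX ^ k * qAppell1 q (a * q ^ k) (b * q ^ k) b' (c * q ^ k)) \<and>
         qAppell1 q a (b * q powi (- int n)) b' c =
           (\<Sum>k = 0..n. cst (qbinom q n k * q powi (int (k choose 2) - int n * int k) * (- b) ^ k
                              * qpoch a q k / qpoch c q k)
                         * fpsX ^ k * qAppell1 q (a * q ^ k) b b' (c * q ^ k))"
proof -
  have qpoch_q: "\<And>m. qpoch q q m \<noteq> 0"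
    using assms(2) by (rule qpoch_q_nonzero)
  have "qbinomial_fps q (b * q ^ n) =
      (\<Sum>k = 0..n. fps_const (qbinom q n k * q ^ (2 * (k choose 2)) * b ^ k) * fps_X ^ k * qbinomial_fps q (b * q ^ k))"
    using qbinomial_fps_mult_power_eq_sum[OF qpoch_q, of b n] by (simp add: atLeast0AtMost qchoose_def)
  moreover have "qbinomial_fps q (b * q powi (- int n)) =
      (\<Sum>k = 0..n. fps_const (qbinom q n k * q powi (int (k choose 2) - int n * int k) * (- b) ^ k) *
        fps_X ^ k * qbinomial_fps q b)"
    using qbinomial_fps_mult_power_int_neg_eq_sum[OF qpoch_q, of b n] assms(1)
    by (simp add: atLeast0AtMost qchoose_def)
  ultimately show ?thesis
    by (intro conjI qAppell1_eq_sumI)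
qed

end
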